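(* Let $\{g_1,\dots,g_p\}\subset\mathbb{N}^2$ be the minimal system of generators of a semigroup $\mathcal{F}$, and let $\tau=\{tg_1\mid t\in\mathbb{Q}\}$ be an extremal ray of $\mathcal{F}$. Assume that $g_1$ generates $\mathbb{N}^2\cap\tau$. Let $\{s_1,\dots,s_t\}$ be the minimal system of generators of a subsemigroup of $\mathbb{N}^2\cap\tau$, and let $0<\lambda_1<\cdots<\lambda_t$ be the integers with $s_i=\lambda_ig_1$. Let $\mathcal{F}'$ be the semigroup generated by $B=B_1\cup B_2$, where $$B_1=\{s_1,\dots,s_t,g_2,\dots,g_p\},\qquad B_2=\bigcup_{i=2}^p\{g_i+g_1,\dots,g_i+(\lambda_t-1)g_1\}.$$ Then $\mathcal{F}'\cap\tau=\langle s_1,\dots,s_t\rangle$ and $\mathcal{F}'\setminus\tau=\mathcal{F}\setminus\tau$.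
   Context: $\mathbb{N}=\{0,1,2,\dots\}$. For $\{a_1,\dots,a_r\}\subseteq\mathbb{N}^2$, $\langle a_1,\dots,a_r\rangle=\{\sum\lambda_ja_j\mid\lambda_j\in\mathbb{N}\}$ is the semigroup generated by them; a minimal system of generators is a generating set no proper subset of which generates. An extremal ray of $\mathcal{F}$ is a boundary ray of the cone of non-negative rational combinations of elements of $\mathcal{F}$. *)

theory Defs
  imports Complex_Main
begin

type_synonym pt = "nat \<times> nat"

definition padd :: "pt \<Rightarrow> pt \<Rightarrow> pt" where
  "padd x y = (fst x + fst y, snd x + snd y)"

definition psmul :: "nat \<Rightarrow> pt \<Rightarrow> pt" where
  "psmul k x = (k * fst x, k * snd x)"

inductive_set gen :: "pt set \<Rightarrow> pt set" for A :: "pt set" where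
  zero: "(0, 0) \<in> gen A"
| step: "a \<in> A \<Longrightarrow> x \<in> gen A \<Longrightarrow> padd a x \<in> gen A"

definition min_gens :: "pt set \<Rightarrow> pt set \<Rightarrow> bool" where
  "min_gens G F \<longleftrightarrow> gen G = F \<and> (\<forall>H. H \<subset> G \<longrightarrow> gen H \<noteq> F)"

definition rcone :: "pt set \<Rightarrow> (rat \<times> rat) set" where
  "rcone F = {x. \<exists>S c. finite S \<and> S \<subseteq> F \<and> (\<forall>s\<in>S. c s \<ge> (0::rat)) \<and>
      x = ((\<Sum>s\<in>S. c s * of_nat (fst s)), (\<Sum>s\<in>S. c s * of_nat (snd s)))}"

definition rray :: "pt \<Rightarrow> (rat \<times> rat) set" where
  "rray g = {(t * of_nat (fst g), t * of_nat (snd g)) | t. t \<ge> (0::rat)}"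

definition extremal_ray :: "pt set \<Rightarrow> pt \<Rightarrow> bool" where
  "extremal_ray F g \<longleftrightarrow> g \<noteq> (0, 0) \<and> (of_nat (fst g), of_nat (snd g)) \<in> rcone F \<and>
     (\<forall>x y. x \<in> rcone F \<and> y \<in> rcone F \<and> (fst x + fst y, snd x + snd y) \<in> rray g
        \<longrightarrow> x \<in> rray g \<and> y \<in> rray g)"

definition tau_nat :: "pt \<Rightarrow> pt set" where
  "tau_nat g = {x. \<exists>t::rat. of_nat (fst x) = t * of_nat (fst g) \<and> of_nat (snd x) = t * of_nat (snd g)}"

end

theory Submission
  imports Defs
begin

text \<open>Since \<open>\<tau>\<close> is extremal, a sum of elements of \<open>\<F>\<close> lies on \<open>\<tau>\<close> only if every
  summand does, so \<open>\<F>' \<inter> \<tau>\<close> is generated by the generators of \<open>\<F>'\<close> on \<open>\<tau>\<close>; by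
  minimality \<open>g\<^sub>i \<notin> \<tau>\<close> for \<open>i \<ge> 2\<close>, so these are just \<open>s\<^sub>1, \<dots>, s\<^sub>t\<close>. Off \<open>\<tau>\<close>, an element
  of \<open>\<F>\<close> is \<open>m g\<^sub>1 + g\<^sub>i + y\<close> with \<open>i \<ge> 2\<close> and \<open>y \<in> \<langle>g\<^sub>2, \<dots>, g\<^sub>p\<rangle>\<close>; writing
  \<open>m = q \<lambda>\<^sub>t + r\<close> with \<open>r < \<lambda>\<^sub>t\<close> exhibits it as \<open>q s\<^sub>t + (g\<^sub>i + r g\<^sub>1) + y \<in> \<F>'\<close>.\<close>

lemma padd_zero [simp]: "padd (0,0) y = y" "padd y (0,0) = y"
  by (auto simp: padd_def)

lemma padd_assoc: "padd (padd a x) y = padd a (padd x y)"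
  by (simp add: padd_def)

lemma psmul_Suc: "psmul (Suc k) g = padd g (psmul k g)"
  by (simp add: psmul_def padd_def)

lemma gen_padd: "x \<in> gen A \<Longrightarrow> y \<in> gen A \<Longrightarrow> padd x y \<in> gen A"
  by (induction x rule: gen.induct) (simp_all add: padd_assoc gen.step)

lemma gen_generator: "a \<in> A \<Longrightarrow> a \<in> gen A"
  using gen.step[OF _ gen.zero, of a A] by simp

lemma gen_subset_gen: "A \<subseteq> gen B \<Longrightarrow> gen A \<subseteq> gen B"
proof
  fix x assume AB: "A \<subseteq> gen B" and x: "x \<in> gen A"
  from x show "x \<in> gen B"
    by (induction x rule: gen.induct) (auto intro: gen.zero gen_padd[OF subsetD[OF AB]])
qed

lemma gen_mono: "A \<subseteq> B \<Longrightarrow> gen A \<subseteq> gen B"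
  using gen_subset_gen gen_generator by blast

lemma psmul_in_gen: "s \<in> gen A \<Longrightarrow> psmul k s \<in> gen A"
proof (induction k)
  case 0
  show ?case using gen.zero by (simp add: psmul_def)
next
  case (Suc k)
  then show ?case by (simp add: psmul_Suc gen_padd)
qed

lemma gen_singleton_iff: "x \<in> gen {g} \<longleftrightarrow> (\<exists>k. x = psmul k g)"
proof
  show "x \<in> gen {g} \<Longrightarrow> \<exists>k. x = psmul k g"
  proof (induction x rule: gen.induct)
    case zero
    show ?case by (rule exI[of _ 0]) (simp add: psmul_def)
  next
    case (step a x)
    then show ?case by (metis psmul_Suc singletonD)
  qed
  show "\<exists>k. x = psmul k g \<Longrightarrow> x \<in> gen {g}"
    using psmul_in_gen[OF gen_generator[of g "{g}"]] by auto
qed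

lemma gen_decompose:
  "x \<in> gen G \<Longrightarrow> \<exists>m y. x = padd (psmul m g) y \<and> y \<in> gen (G - {g})"
proof (induction x rule: gen.induct)
  case zero
  show ?case by (intro exI[of _ 0] exI[of _ "(0,0)"]) (auto simp: psmul_def intro: gen.zero)
next
  case (step a x)
  then obtain m y where my: "x = padd (psmul m g) y" "y \<in> gen (G - {g})" by blast
  show ?case
  proof (cases "a = g")
    case True
    with my show ?thesis
      by (intro exI[of _ "Suc m"] exI[of _ y]) (auto simp: psmul_def padd_def)
  next
    case False
    with step.hyps(1) my(2) have "padd a y \<in> gen (G - {g})" by (blast intro: gen.step)
    with my show ?thesis
      by (intro exI[of _ m] exI[of _ "padd a y"]) (auto simp: psmul_def padd_def)
  qed
qed

lemma min_gens_zero_notin: "min_gens G F \<Longrightarrow> (0,0) \<notin> G"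
proof
  assume m: "min_gens G F" and z: "(0,0) \<in> G"
  have "G \<subseteq> gen (G - {(0,0)})"
    using gen_generator[of _ "G - {(0,0)}"] gen.zero by blast
  then have "gen G = gen (G - {(0,0)})"
    using gen_subset_gen gen_mono[of "G - {(0,0)}" G] by blast
  with m z show False unfolding min_gens_def by blast
qed

lemma min_gens_notin_gen_others:
  assumes "min_gens G F" "g \<in> G"
  shows "g \<notin> gen (G - {g})"
proof
  assume "g \<in> gen (G - {g})"
  then have "G \<subseteq> gen (G - {g})" using gen_generator[of _ "G - {g}"] by blast
  then have "gen G = gen (G - {g})"
    using gen_subset_gen gen_mono[of "G - {g}" G] by blast
  with assms show False unfolding min_gens_def by blast
qed

lemma rcone_generator: "x \<in> F \<Longrightarrow> (of_nat (fst x), of_nat (snd x)) \<in> rcone F"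
  unfolding rcone_def by (intro CollectI exI[of _ "{x}"] exI[of _ "\<lambda>_. 1"]) simp

text \<open>A lattice point on the line through \<open>g \<noteq> 0\<close> lies on the half-line: the rational
  coefficient is forced to be non-negative because both coordinates are natural numbers.\<close>
lemma tau_nat_iff_rray:
  assumes "g \<noteq> (0,0)"
  shows "x \<in> tau_nat g \<longleftrightarrow> (of_nat (fst x), of_nat (snd x)) \<in> rray g"
proof
  assume "x \<in> tau_nat g"
  then obtain t :: rat where t: "of_nat (fst x) = t * of_nat (fst g)" "of_nat (snd x) = t * of_nat (snd g)"
    unfolding tau_nat_def by blast
  have "t \<ge> 0"
  proof (rule ccontr)
    assume "\<not> t \<ge> 0"
    then have "t * of_nat (fst g) \<le> 0" "t * of_nat (snd g) \<le> 0"
      by (simp_all add: mult_nonpos_nonneg)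
    with t have "t * of_nat (fst g) = 0" "t * of_nat (snd g) = 0"
      by (metis of_nat_0_le_iff order_antisym)+
    with \<open>\<not> t \<ge> 0\<close> assms show False by (auto simp: prod_eq_iff)
  qed
  with t show "(of_nat (fst x), of_nat (snd x)) \<in> rray g" unfolding rray_def by auto
qed (auto simp: tau_nat_def rray_def)

lemma extremal_ray_summands:
  assumes "extremal_ray F g" "a \<in> F" "x \<in> F" "padd a x \<in> tau_nat g"
  shows "a \<in> tau_nat g" "x \<in> tau_nat g"
proof -
  have g: "g \<noteq> (0,0)" using assms(1) unfolding extremal_ray_def by blast
  have "(of_nat (fst a) + of_nat (fst x), of_nat (snd a) + of_nat (snd x)) \<in> rray g"
    using assms(4) tau_nat_iff_rray[OF g, of "padd a x"] by (simp add: padd_def)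
  then have "(of_nat (fst a), of_nat (snd a)) \<in> rray g \<and> (of_nat (fst x), of_nat (snd x)) \<in> rray g"
    using assms(1) rcone_generator[OF assms(2)] rcone_generator[OF assms(3)]
    unfolding extremal_ray_def by (metis fst_conv snd_conv)
  then show "a \<in> tau_nat g" "x \<in> tau_nat g" using tau_nat_iff_rray[OF g] by auto
qed

lemma gen_inter_extremal_ray:
  assumes "extremal_ray (gen G) g" "B \<subseteq> gen G"
  shows "gen B \<inter> tau_nat g \<subseteq> gen (B \<inter> tau_nat g)"
proof
  fix z assume "z \<in> gen B \<inter> tau_nat g"
  then have "z \<in> gen B" "z \<in> tau_nat g" by auto
  then show "z \<in> gen (B \<inter> tau_nat g)"
  proof (induction z rule: gen.induct)
    case zero
    show ?case by (rule gen.zero)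
  next
    case (step a x)
    have "x \<in> gen G" using step.hyps(2) gen_subset_gen[OF assms(2)] by blast
    with assms step.hyps(1) step.prems
    have "a \<in> tau_nat g" "x \<in> tau_nat g" using extremal_ray_summands by blast+
    with step show ?case by (blast intro: gen.step)
  qed
qed

definition shifted_gens :: "pt set \<Rightarrow> pt \<Rightarrow> nat \<Rightarrow> pt set" where
  "shifted_gens G g l = (\<Union>h\<in>G - {g}. {padd h (psmul k g) | k. 1 \<le> k \<and> k \<le> l - 1})"

lemma gen_off_ray_subset:
  assumes "0 < l" "psmul l g \<in> gen B" "G - {g} \<subseteq> B" "shifted_gens G g l \<subseteq> B"
    and "x \<in> gen G" "x \<notin> gen {g}"
  shows "x \<in> gen B"
proof -
  obtain m y where my: "x = padd (psmul m g) y" "y \<in> gen (G - {g})"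
    using gen_decompose[OF assms(5)] by blast
  have "y \<noteq> (0,0)" using my assms(6) gen_singleton_iff by auto
  then obtain h y' where hy: "h \<in> G - {g}" "y' \<in> gen (G - {g})" "y = padd h y'"
    using my(2) gen.simps[of y "G - {g}"] by blast
  define q r where "q = m div l" and "r = m mod l"
  have m: "m = q * l + r" unfolding q_def r_def by simp
  have x: "x = padd (psmul q (psmul l g)) (padd (padd h (psmul r g)) y')"
    unfolding my(1) hy(3) m by (simp add: padd_def psmul_def algebra_simps)
  have "padd h (psmul r g) \<in> B"
  proof (cases "r = 0")
    case True
    then show ?thesis using hy(1) assms(3) by (auto simp: psmul_def)
  next
    case False
    have "r < l" unfolding r_def using assms(1) by simp
    with False hy(1) have "padd h (psmul r g) \<in> shifted_gens G g l"
      unfolding shifted_gens_def by (intro UN_I[of h]) (auto intro!: exI[of _ r])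
    with assms(4) show ?thesis by blast
  qed
  moreover have "y' \<in> gen B" using hy(2) gen_mono[OF assms(3)] by blast
  moreover have "psmul q (psmul l g) \<in> gen B" using psmul_in_gen[OF assms(2)] .
  ultimately show ?thesis unfolding x by (metis gen_padd gen_generator)
qed

lemma Max_multiple_in:
  assumes "finite S" "S \<noteq> {}" "S \<subseteq> gen {g}" "(0,0) \<notin> S" "g \<noteq> (0,0)"
  shows "psmul (Max {k. psmul k g \<in> S}) g \<in> S" "0 < Max {k. psmul k g \<in> S}"
proof -
  have "inj (\<lambda>k. psmul k g)"
    using assms(5) by (intro injI) (auto simp: psmul_def prod_eq_iff)
  then have "finite {k. psmul k g \<in> S}"
    using finite_vimageI[OF assms(1)] by (simp add: vimage_def)
  moreover obtain s where "s \<in> S" using assms(2) by blast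
  then obtain k where "psmul k g \<in> S" using assms(3) gen_singleton_iff[of s g] by auto
  then have "{k. psmul k g \<in> S} \<noteq> {}" by blast
  ultimately show max: "psmul (Max {k. psmul k g \<in> S}) g \<in> S" using Max_in by blast
  with assms(4) show "0 < Max {k. psmul k g \<in> S}"
    by (metis gr0I mult_zero_left psmul_def)
qed

theorem lemma2p4:
  fixes G S :: "pt set" and g1 :: pt
  assumes "finite G" and "g1 \<in> G"
    and "min_gens G (gen G)"
    and "extremal_ray (gen G) g1"
    and "tau_nat g1 = gen {g1}"
    and "finite S" and "S \<noteq> {}" and "S \<subseteq> tau_nat g1"
    and "min_gens S (gen S)"
  shows "let lt = Max {k. psmul k g1 \<in> S};
             B1 = S \<union> (G - {g1});
             B2 = (\<Union>g\<in>G - {g1}. {padd g (psmul k g1) | k. 1 \<le> k \<and> k \<le> lt - 1});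
             F' = gen (B1 \<union> B2)
         in F' \<inter> tau_nat g1 = gen S \<and> F' - tau_nat g1 = gen G - tau_nat g1"
proof -
  define lt where "lt = Max {k. psmul k g1 \<in> S}"
  define B where "B = S \<union> (G - {g1}) \<union> shifted_gens G g1 lt"
  have g1: "g1 \<noteq> (0,0)" using assms(4) unfolding extremal_ray_def by blast
  have lt: "psmul lt g1 \<in> S" "0 < lt"
    using Max_multiple_in[OF assms(6,7) _ min_gens_zero_notin[OF assms(9)] g1] assms(5,8)
    unfolding lt_def by auto
  have off_ray: "h \<notin> tau_nat g1" if "h \<in> G - {g1}" for h
    using min_gens_notin_gen_others[OF assms(3), of h] gen_mono[of "{g1}" "G - {h}"] that assms(2,5)
    by blast
  have gen_g1: "gen {g1} \<subseteq> gen G" using assms(2) by (intro gen_mono) blast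
  have BG: "B \<subseteq> gen G"
    using assms(5,8) gen_g1 gen_generator[of _ G] psmul_in_gen[OF gen_generator[OF assms(2)]]
    unfolding B_def shifted_gens_def by (blast intro: gen_padd)
  have "B \<inter> tau_nat g1 \<subseteq> S"
    using off_ray extremal_ray_summands(1)[OF assms(4)] BG psmul_in_gen[OF gen_generator[OF assms(2)]]
    unfolding B_def shifted_gens_def by blast
  then have "gen B \<inter> tau_nat g1 = gen S"
    using gen_inter_extremal_ray[OF assms(4) BG] gen_mono[of "B \<inter> tau_nat g1" S]
      gen_mono[of S B] gen_subset_gen[of S "{g1}"] assms(5,8)
    unfolding B_def by blast
  moreover have "gen B - tau_nat g1 = gen G - tau_nat g1"
    using gen_off_ray_subset[OF lt(2), of g1 B G] lt(1) gen_subset_gen[OF BG] assms(5)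
    unfolding B_def by (blast intro: gen_generator)
  ultimately show ?thesis
    unfolding Let_def lt_def[symmetric] shifted_gens_def[symmetric] B_def by (simp add: Un_assoc)
qed

end
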